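(* For all integers $n\ge1$ and real numbers $x\in(0,1)$, $$\arccos(x)<\int_x^1\frac{U_{2n}(t)}{\sqrt{1-t^2}}\,dt<\pi-\arccos(x).$$ If $x\in(-1,0)$, then both inequalities hold reversed, i.e. $\arccos(x)>\int_x^1\frac{U_{2n}(t)}{\sqrt{1-t^2}}\,dt>\pi-\arccos(x)$.
   Context: $U_j$ denotes the Chebyshev polynomial of the second kind of degree $j$, i.e. $U_j(\cos t)=\sin((j+1)t)/\sin t$ for $t\in[0,\pi]$. *)

theory Defs
  imports "HOL-Analysis.Analysis"
begin

fun chebU :: "nat \<Rightarrow> real \<Rightarrow> real" where
  "chebU 0 t = 1"
| "chebU (Suc 0) t = 2 * t"
| "chebU (Suc (Suc j)) t = 2 * t * chebU (Suc j) t - chebU j t"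

end

theory Submission
  imports Defs
begin

text \<open>With \<open>t = cos \<theta>\<close>, \<open>U_2n(t)\<close> becomes the Dirichlet kernel \<open>1 + 2 \<Sum>k\<le>n. cos (2k\<theta>)\<close>,
so the integral equals \<open>\<theta> + S_n(2\<theta>)\<close> for \<open>\<theta> = arccos x\<close>, where \<open>S_n(p) = \<Sum>k\<le>n. sin (kp) / k\<close>.
The theorem thus reduces to the Fejer-Jackson-Gronwall inequality \<open>0 < S_n(p) < pi - p\<close> on
\<open>(0, pi)\<close>, applied at \<open>p = 2\<theta>\<close> when \<open>x > 0\<close> and, through \<open>S_n(2pi - p) = - S_n(p)\<close>, at
\<open>p = 2pi - 2\<theta>\<close> when \<open>x < 0\<close>. Both halves follow by induction on \<open>n\<close>: at an interior extremum
\<open>q\<close> of \<open>S_(n+1)\<close> (resp. of \<open>pi - q - S_(n+1)\<close>) the closed form of the cosine sum forces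
\<open>sin ((n+1) q)\<close> to have the sign that preserves the bound.\<close>

definition sin_sum :: "nat \<Rightarrow> real \<Rightarrow> real" where
  "sin_sum n p = (\<Sum>k=1..n. sin (real k * p) / real k)"

definition cos_sum :: "nat \<Rightarrow> real \<Rightarrow> real" where
  "cos_sum n p = (\<Sum>k=1..n. cos (real k * p))"

lemma sin_sum_0 [simp]: "sin_sum n 0 = 0"
  by (simp add: sin_sum_def)

lemma sin_sum_pi [simp]: "sin_sum n pi = 0"
  by (simp add: sin_sum_def)

lemma sin_sum_Suc: "sin_sum (Suc n) p = sin_sum n p + sin (real (Suc n) * p) / real (Suc n)"
  by (simp add: sin_sum_def)

lemma sin_sum_reflect: "sin_sum n (2 * pi - p) = - sin_sum n p"
proof -
  have "sin (real k * (2 * pi - p)) = - sin (real k * p)" for k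
  proof -
    have "real k * (2 * pi - p) = real (2 * k) * pi - real k * p"
      by (simp add: algebra_simps)
    then show ?thesis by (simp add: sin_diff cos_npi)
  qed
  then show ?thesis by (simp add: sin_sum_def sum_negf)
qed

lemma has_real_derivative_sin_sum: "(sin_sum n has_real_derivative cos_sum n p) (at p)"
  unfolding sin_sum_def cos_sum_def by (auto intro!: derivative_eq_intros)

lemma continuous_on_sin_sum: "continuous_on A (sin_sum n)"
  using has_real_derivative_sin_sum DERIV_isCont continuous_at_imp_continuous_on by blast

lemma abs_cos_sum_le: "\<bar>cos_sum n p\<bar> \<le> real n"
proof -
  have "\<bar>cos_sum n p\<bar> \<le> (\<Sum>k=1..n. \<bar>cos (real k * p)\<bar>)"
    unfolding cos_sum_def by (rule sum_abs)
  also have "\<dots> \<le> (\<Sum>k=1..n. 1)"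
    by (rule sum_mono) simp
  finally show ?thesis by simp
qed

lemma sin_half_mult_cos_sum:
  "2 * sin (p/2) * cos_sum n p = sin ((real n + 1/2) * p) - sin (p/2)"
proof (induction n)
  case 0
  then show ?case by (simp add: cos_sum_def)
next
  case (Suc n)
  have "(real n + 3/2) * p = (real n + 1) * p + p/2" "(real n + 1/2) * p = (real n + 1) * p - p/2"
    by (simp_all add: algebra_simps)
  then have "2 * sin (p/2) * cos ((real n + 1) * p) = sin ((real n + 3/2) * p) - sin ((real n + 1/2) * p)"
    by (simp add: sin_add sin_diff)
  moreover have "cos_sum (Suc n) p = cos_sum n p + cos ((real n + 1) * p)"
    by (simp add: cos_sum_def add.commute)
  ultimately show ?case
    using Suc by (simp add: algebra_simps)
qed

text \<open>At an extremum \<open>q\<close> of a partial sum, \<open>a = (n + 1/2) q\<close> satisfies \<open>sin a = \<plusminus> sin (q/2)\<close>;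
then \<open>sin (a - q/2) = sin (n q)\<close> has a definite sign.\<close>

lemma sin_diff_half_nonneg:
  assumes q: "0 < q" "q < pi" and a: "sin a = sin (q/2)"
  shows "sin (a - q/2) \<ge> 0"
proof -
  have pos: "sin (q/2) > 0" "cos (q/2) > 0"
    using q by (auto intro!: sin_gt_zero cos_gt_zero)
  have "(sin a)\<^sup>2 = (sin (q/2))\<^sup>2"
    using a by simp
  then have "(cos a)\<^sup>2 = (cos (q/2))\<^sup>2"
    using sin_cos_squared_add[of a] sin_cos_squared_add[of "q/2"] by linarith
  then have "cos a \<le> cos (q/2)"
    using pos by (metis abs_ge_self abs_of_pos power2_abs real_sqrt_abs)
  then have "0 \<le> sin (q/2) * (cos (q/2) - cos a)"
    using pos by simp
  also have "\<dots> = sin (a - q/2)"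
    using a by (simp add: sin_diff algebra_simps)
  finally show ?thesis .
qed

lemma sin_diff_half_nonpos:
  assumes "0 < q" "q < pi" and "sin a = - sin (q/2)"
  shows "sin (a - q/2) \<le> 0"
proof -
  have "sin (a + pi - q/2) \<ge> 0"
    using sin_diff_half_nonneg[of q "a + pi"] assms by simp
  moreover have "a + pi - q/2 = (a - q/2) + pi"
    by simp
  ultimately show ?thesis
    by (simp add: sin_periodic_pi)
qed

lemma pos_on_interior_if_pos_at_critical_points:
  fixes g g' :: "real \<Rightarrow> real"
  assumes cont: "continuous_on {a..b} g"
    and deriv: "\<And>q. a < q \<Longrightarrow> q < b \<Longrightarrow> (g has_real_derivative g' q) (at q)"
    and ends: "g a \<ge> 0" "g b \<ge> 0"
    and crit: "\<And>q. a < q \<Longrightarrow> q < b \<Longrightarrow> g' q = 0 \<Longrightarrow> g q > 0"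
    and p: "a < p" "p < b"
  shows "g p > 0"
proof (rule ccontr)
  assume nonpos: "\<not> g p > 0"
  obtain m where m: "m \<in> {a..b}" "\<And>y. y \<in> {a..b} \<Longrightarrow> g m \<le> g y"
    using continuous_attains_inf[OF compact_Icc _ cont] p by fastforce
  have "\<exists>q. a < q \<and> q < b \<and> (\<forall>y\<in>{a..b}. g q \<le> g y)"
  proof (cases "a < m \<and> m < b")
    case True
    with m show ?thesis by blast
  next
    case False
    with m(1) have "m = a \<or> m = b" by auto
    with ends have "g m \<ge> 0" by auto
    with m(2) p nonpos show ?thesis by force
  qed
  then obtain q where q: "a < q" "q < b" "\<And>y. y \<in> {a..b} \<Longrightarrow> g q \<le> g y"
    by blast
  then have "g' q = 0"
    by (intro DERIV_local_min[OF deriv, of q "min (q - a) (b - q)"])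
       (auto simp: abs_less_iff intro!: q(3))
  then have "g q > 0"
    using crit q by blast
  with q(3)[of p] p nonpos show False by simp
qed

lemma sin_sum_pos:
  assumes "n \<ge> 1" and "0 < p" "p < pi"
  shows "sin_sum n p > 0"
  using assms
proof (induction n arbitrary: p rule: nat_induct_at_least)
  case base
  then show ?case by (simp add: sin_sum_def sin_gt_zero)
next
  case (Suc n)
  show ?case
  proof (rule pos_on_interior_if_pos_at_critical_points[OF
        continuous_on_sin_sum has_real_derivative_sin_sum])
    fix q assume q: "0 < q" "q < pi" and "cos_sum (Suc n) q = 0"
    then have "sin ((real (Suc n) + 1/2) * q) = sin (q/2)"
      using sin_half_mult_cos_sum[of q "Suc n"] by simp
    from sin_diff_half_nonneg[OF q this] have "sin (real (Suc n) * q) \<ge> 0"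
      by (simp add: algebra_simps)
    moreover have "sin_sum n q > 0"
      using Suc.IH q by blast
    ultimately show "sin_sum (Suc n) q > 0"
      by (simp add: sin_sum_Suc add_pos_nonneg)
  qed (use Suc.prems in auto)
qed

lemma sin_sum_less:
  assumes "0 < p" "p < pi"
  shows "sin_sum n p < pi - p"
  using assms
proof (induction n arbitrary: p)
  case 0
  then show ?case by (simp add: sin_sum_def)
next
  case (Suc n)
  have "pi - p - sin_sum (Suc n) p > 0"
  proof (rule pos_on_interior_if_pos_at_critical_points[where
        g = "\<lambda>q. pi - q - sin_sum (Suc n) q" and g' = "\<lambda>q. -1 - cos_sum (Suc n) q"])
    show "continuous_on {0..pi} (\<lambda>q. pi - q - sin_sum (Suc n) q)"
      by (intro continuous_intros continuous_on_sin_sum)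
    show "((\<lambda>q. pi - q - sin_sum (Suc n) q) has_real_derivative -1 - cos_sum (Suc n) q) (at q)" for q
      by (auto intro!: derivative_eq_intros has_real_derivative_sin_sum)
  next
    fix q assume q: "0 < q" "q < pi" and "-1 - cos_sum (Suc n) q = 0"
    then have "cos_sum (Suc n) q = -1"
      by simp
    then have "sin ((real (Suc n) + 1/2) * q) = - sin (q/2)"
      using sin_half_mult_cos_sum[of q "Suc n"] by (simp add: algebra_simps)
    from sin_diff_half_nonpos[OF q this] have "sin (real (Suc n) * q) / real (Suc n) \<le> 0"
      by (simp add: algebra_simps divide_nonpos_pos)
    moreover have "sin_sum n q < pi - q"
      using Suc.IH q by blast
    ultimately show "pi - q - sin_sum (Suc n) q > 0"
      unfolding sin_sum_Suc by linarith
  qed (use Suc.prems in auto)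
  then show ?case by simp
qed

lemma chebU_cos_mult_sin: "chebU j (cos \<theta>) * sin \<theta> = sin ((real j + 1) * \<theta>)"
proof (induction j rule: induct_nat_012)
  case 0
  then show ?case by simp
next
  case 1
  then show ?case by (simp add: sin_double)
next
  case (ge2 j)
  have shift: "(real j + 3) * \<theta> = (real j + 2) * \<theta> + \<theta>" "(real j + 1) * \<theta> = (real j + 2) * \<theta> - \<theta>"
    by (simp_all add: algebra_simps)
  have "2 * cos \<theta> * sin ((real j + 2) * \<theta>) - sin ((real j + 1) * \<theta>) = sin ((real j + 3) * \<theta>)"
    unfolding shift sin_add sin_diff by (simp add: algebra_simps)
  moreover have "chebU (Suc (Suc j)) (cos \<theta>) * sin \<theta>
      = 2 * cos \<theta> * (chebU (Suc j) (cos \<theta>) * sin \<theta>) - chebU j (cos \<theta>) * sin \<theta>"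
    by (simp add: algebra_simps)
  ultimately show ?case
    using ge2 by (simp add: add.commute add.left_commute)
qed

lemma chebU_even_eq_dirichlet:
  assumes "-1 < t" "t < 1"
  shows "chebU (2*n) t = 1 + 2 * cos_sum n (2 * arccos t)"
proof -
  define \<theta> where "\<theta> = arccos t"
  have "sin \<theta> > 0"
    unfolding \<theta>_def using assms arccos_lt_bounded by (simp add: sin_gt_zero)
  moreover have "chebU (2*n) t * sin \<theta> = sin \<theta> * (1 + 2 * cos_sum n (2*\<theta>))"
    using chebU_cos_mult_sin[of "2*n" \<theta>] sin_half_mult_cos_sum[of "2*\<theta>" n] assms
    by (simp add: \<theta>_def algebra_simps)
  ultimately show ?thesis
    unfolding \<theta>_def by (simp add: mult.commute)
qed

lemma chebU_even_lower_bound: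
  assumes "-1 < t" "t < 1"
  shows "chebU (2*n) t \<ge> - (2 * real n + 1)"
  using chebU_even_eq_dirichlet[OF assms, of n] abs_cos_sum_le[of n "2 * arccos t"] by linarith

lemma isCont_chebU: "isCont (chebU j) t"
  by (induction j rule: induct_nat_012) (simp_all add: continuous_intros)

lemma has_real_derivative_arccos_plus_sin_sum:
  assumes "-1 < t" "t < 1"
  shows "((\<lambda>t. arccos t + sin_sum n (2 * arccos t))
           has_real_derivative - (chebU (2*n) t / sqrt (1 - t\<^sup>2))) (at t)"
proof -
  have "((\<lambda>t. arccos t + sin_sum n (2 * arccos t)) has_real_derivative
         inverse (- sqrt (1 - t\<^sup>2)) + cos_sum n (2 * arccos t) * (2 * inverse (- sqrt (1 - t\<^sup>2)))) (at t)"
    by (intro derivative_intros DERIV_arccos assms DERIV_chain2[OF has_real_derivative_sin_sum]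
        DERIV_cmult[where c=2, OF DERIV_arccos])
  moreover have "inverse (- sqrt (1 - t\<^sup>2)) + cos_sum n (2 * arccos t) * (2 * inverse (- sqrt (1 - t\<^sup>2)))
      = - (chebU (2*n) t / sqrt (1 - t\<^sup>2))"
    using chebU_even_eq_dirichlet[OF assms, of n] by (simp add: divide_simps)
  ultimately show ?thesis by simp
qed

lemma tendsto_at_right_ereal_if_continuous_on:
  assumes "a < b" "continuous_on {a..b} F"
  shows "((F \<circ> real_of_ereal) \<longlongrightarrow> F a) (at_right (ereal a))"
proof -
  have "(F \<longlongrightarrow> F a) (at a within {a..b})"
    using assms by (simp add: continuous_on_def)
  then show ?thesis
    using assms by (simp add: ereal_tendsto_simps1 at_within_Icc_at_right)
qed

lemma tendsto_at_left_ereal_if_continuous_on: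
  assumes "a < b" "continuous_on {a..b} F"
  shows "((F \<circ> real_of_ereal) \<longlongrightarrow> F b) (at_left (ereal b))"
proof -
  have "(F \<longlongrightarrow> F b) (at b within {a..b})"
    using assms by (simp add: continuous_on_def)
  then show ?thesis
    using assms by (simp add: ereal_tendsto_simps1 at_within_Icc_at_left)
qed

text \<open>An improper FTC for integrands that may change sign: integrability comes from the
nonnegative integrands \<open>g\<close> and \<open>f + g\<close>.\<close>

lemma interval_integral_FTC_bounded_below:
  fixes f g F G :: "real \<Rightarrow> real"
  assumes "a < b"
    and cont: "continuous_on {a..b} F" "continuous_on {a..b} G"
    and deriv: "\<And>t. a < t \<Longrightarrow> t < b \<Longrightarrow> (F has_real_derivative f t) (at t)"
      "\<And>t. a < t \<Longrightarrow> t < b \<Longrightarrow> (G has_real_derivative g t) (at t)"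
    and isCont: "\<And>t. a < t \<Longrightarrow> t < b \<Longrightarrow> isCont f t" "\<And>t. a < t \<Longrightarrow> t < b \<Longrightarrow> isCont g t"
    and nonneg: "\<And>t. a < t \<Longrightarrow> t < b \<Longrightarrow> 0 \<le> g t" "\<And>t. a < t \<Longrightarrow> t < b \<Longrightarrow> 0 \<le> f t + g t"
  shows "(LBINT t=a..b. f t) = F b - F a"
proof -
  have ab: "ereal a < ereal b"
    using \<open>a < b\<close> by simp
  have lim: "((H \<circ> real_of_ereal) \<longlongrightarrow> H a) (at_right (ereal a))"
            "((H \<circ> real_of_ereal) \<longlongrightarrow> H b) (at_left (ereal b))"
    if "continuous_on {a..b} H" for H
    using that \<open>a < b\<close>
    by (auto intro: tendsto_at_right_ereal_if_continuous_on tendsto_at_left_ereal_if_continuous_on)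
  have "set_integrable lborel (einterval a b) g"
    by (rule interval_integral_FTC_nonneg(1)[OF ab, where F = G])
       (auto intro!: deriv isCont nonneg AE_I2 lim cont)
  moreover have "set_integrable lborel (einterval a b) (\<lambda>t. f t + g t)"
    by (rule interval_integral_FTC_nonneg(1)[OF ab, where F = "\<lambda>t. F t + G t"])
       (auto intro!: deriv isCont nonneg AE_I2 lim cont derivative_intros continuous_intros)
  ultimately have "set_integrable lborel (einterval a b) f"
    using set_integral_diff(1) by fastforce
  then show ?thesis
    using lim[OF cont(1)]
    by (intro interval_integral_FTC_integrable[OF ab] isCont)
       (auto simp: has_real_derivative_iff_has_vector_derivative[symmetric] intro: deriv)
qed

lemma integral_chebU_even_div_sqrt:
  assumes x: "-1 < x" "x < 1"
  shows "(LBINT t=x..1. chebU (2*n) t / sqrt (1 - t\<^sup>2)) = arccos x + sin_sum n (2 * arccos x)"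
proof -
  have sqrt_pos: "sqrt (1 - t\<^sup>2) > 0" if "x < t" "t < 1" for t
    using that x by (simp add: abs_square_less_1)
  have "(LBINT t=ereal x..ereal 1. chebU (2*n) t / sqrt (1 - t\<^sup>2))
      = - (arccos 1 + sin_sum n (2 * arccos 1)) - - (arccos x + sin_sum n (2 * arccos x))"
  proof (rule interval_integral_FTC_bounded_below[where G = "\<lambda>t. - (2 * real n + 1) * arccos t"
        and g = "\<lambda>t. (2 * real n + 1) / sqrt (1 - t\<^sup>2)"])
    fix t assume t: "x < t" "t < 1"
    then have t': "-1 < t" "t < 1" using x by auto
    show "((\<lambda>t. - (arccos t + sin_sum n (2 * arccos t)))
            has_real_derivative chebU (2*n) t / sqrt (1 - t\<^sup>2)) (at t)"
      using DERIV_minus[OF has_real_derivative_arccos_plus_sin_sum[OF t']] by simp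
    show "((\<lambda>t. - (2 * real n + 1) * arccos t)
            has_real_derivative (2 * real n + 1) / sqrt (1 - t\<^sup>2)) (at t)"
      by (rule DERIV_cong[OF DERIV_cmult[OF DERIV_arccos[OF t']]]) (simp add: divide_simps)
    show "isCont (\<lambda>t. chebU (2*n) t / sqrt (1 - t\<^sup>2)) t"
         "isCont (\<lambda>t. (2 * real n + 1) / sqrt (1 - t\<^sup>2)) t"
      using sqrt_pos[OF t] by (auto intro!: continuous_intros isCont_chebU)
    show "0 \<le> (2 * real n + 1) / sqrt (1 - t\<^sup>2)"
      using sqrt_pos[OF t] by simp
    show "0 \<le> chebU (2*n) t / sqrt (1 - t\<^sup>2) + (2 * real n + 1) / sqrt (1 - t\<^sup>2)"
      using chebU_even_lower_bound[OF t', of n] sqrt_pos[OF t] by (simp add: add_divide_distrib[symmetric])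
  qed (use x in \<open>auto intro!: continuous_intros continuous_on_compose2[OF continuous_on_sin_sum]\<close>)
  then show ?thesis by (simp add: one_ereal_def)
qed

theorem theorem4p3:
  fixes n :: nat and x :: real
  assumes "n \<ge> 1"
  shows "(0 < x \<and> x < 1 \<longrightarrow>
           arccos x < (LBINT t=x..1. chebU (2*n) t / sqrt (1 - t\<^sup>2)) \<and>
           (LBINT t=x..1. chebU (2*n) t / sqrt (1 - t\<^sup>2)) < pi - arccos x)
       \<and> (-1 < x \<and> x < 0 \<longrightarrow>
           arccos x > (LBINT t=x..1. chebU (2*n) t / sqrt (1 - t\<^sup>2)) \<and>
           (LBINT t=x..1. chebU (2*n) t / sqrt (1 - t\<^sup>2)) > pi - arccos x)"
proof (intro conjI impI; elim conjE)
  assume x: "0 < x" "x < 1"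
  then have "0 < 2 * arccos x" "2 * arccos x < pi"
    using arccos_less_arccos[of 0 x] arccos_less_arccos[of x 1] by auto
  then have "0 < sin_sum n (2 * arccos x)" "sin_sum n (2 * arccos x) < pi - 2 * arccos x"
    using sin_sum_pos[OF assms] sin_sum_less by auto
  then show "arccos x < (LBINT t=x..1. chebU (2*n) t / sqrt (1 - t\<^sup>2))"
    and "(LBINT t=x..1. chebU (2*n) t / sqrt (1 - t\<^sup>2)) < pi - arccos x"
    using integral_chebU_even_div_sqrt[of x n] x by auto
next
  assume x: "-1 < x" "x < 0"
  define q where "q = 2 * pi - 2 * arccos x"
  have "0 < q" "q < pi"
    using arccos_less_arccos[of x 0] arccos_less_arccos[of "-1" x] x by (auto simp: q_def)
  then have "0 < sin_sum n q" "sin_sum n q < pi - q"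
    using sin_sum_pos[OF assms] sin_sum_less by auto
  moreover have "sin_sum n (2 * arccos x) = - sin_sum n q"
    using sin_sum_reflect[of n q] by (simp add: q_def)
  ultimately show "arccos x > (LBINT t=x..1. chebU (2*n) t / sqrt (1 - t\<^sup>2))"
    and "(LBINT t=x..1. chebU (2*n) t / sqrt (1 - t\<^sup>2)) > pi - arccos x"
    using integral_chebU_even_div_sqrt[of x n] x by (auto simp: q_def)
qed

end
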